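(* Let $M\geq 1$ be an integer and consider the bilateral cooperation model described in the context, with arbitrary real utility vectors. Then every dominant-strategy incentive-compatible (DSIC) mechanism $r$ has competitive ratio $C_r\leq 1/M$.
   Context: Bilateral cooperation model: there are two agents, a buyer and a seller, and options $0,1,\dots,M$. A buyer utility vector is $b=(b_1,\dots,b_M)\in\mathbb{R}^M$ and a seller utility vector is $s=(s_1,\dots,s_M)\in\mathbb{R}^M$ (entries may be positive, zero or negative; these are private information); by convention $b_0=s_0=0$. Define $\mathrm{Feasible}(b,s)=\{i\in\{0,\dots,M\}: b_i\geq 0 \text{ and } s_i\geq 0\}$ and $OPT(b,s)=\max_{i\in \mathrm{Feasible}(b,s)}(b_i+s_i)$. A mechanism is a function $r$ mapping each pair of reported vectors $(b',s')\in\mathbb{R}^M\times\mathbb{R}^M$ to a probability vector $(r_0(b',s'),\dots,r_M(b',s'))$ with nonnegative entries summing to $1$. The mechanism $r$ is DSIC if for all $b,b',s,s'\in\mathbb{R}^M$: $\sum_{i=1}^M r_i(b,s')\,b_i\geq \sum_{i=1}^M r_i(b',s')\,b_i$ and $\sum_{i=1}^M r_i(b',s)\,s_i\geq \sum_{i=1}^M r_i(b',s')\,s_i$ (here $b,s$ are the true vectors). For a DSIC mechanism, its gain at true vectors $(b,s)$ is $G_r(b,s)=\sum_{i=1}^M r_i(b,s)(b_i+s_i)$, and its competitive ratio is $C_r=\min_{b,s} G_r(b,s)/OPT(b,s)$. *)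

theory Defs
  imports Complex_Main "HOL-Library.Extended_Real"
begin

text \<open>Utility vectors in R^M are represented as functions nat => real that vanish
  outside {1..M}; in particular b 0 = 0 (the convention b_0 = s_0 = 0).\<close>
definition vecs :: "nat \<Rightarrow> (nat \<Rightarrow> real) set" where
  "vecs M = {b. \<forall>i. i \<notin> {1..M} \<longrightarrow> b i = 0}"

definition Feasible :: "nat \<Rightarrow> (nat \<Rightarrow> real) \<Rightarrow> (nat \<Rightarrow> real) \<Rightarrow> nat set" where
  "Feasible M b s = {i \<in> {0..M}. b i \<ge> 0 \<and> s i \<ge> 0}"

definition OPT :: "nat \<Rightarrow> (nat \<Rightarrow> real) \<Rightarrow> (nat \<Rightarrow> real) \<Rightarrow> real" where
  "OPT M b s = Max ((\<lambda>i. b i + s i) ` Feasible M b s)"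

definition mechanism :: "nat \<Rightarrow> ((nat \<Rightarrow> real) \<Rightarrow> (nat \<Rightarrow> real) \<Rightarrow> nat \<Rightarrow> real) \<Rightarrow> bool" where
  "mechanism M r \<longleftrightarrow> (\<forall>b \<in> vecs M. \<forall>s \<in> vecs M.
      (\<forall>i \<in> {0..M}. r b s i \<ge> 0) \<and> (\<Sum>i = 0..M. r b s i) = 1)"

definition DSIC :: "nat \<Rightarrow> ((nat \<Rightarrow> real) \<Rightarrow> (nat \<Rightarrow> real) \<Rightarrow> nat \<Rightarrow> real) \<Rightarrow> bool" where
  "DSIC M r \<longleftrightarrow> (\<forall>b \<in> vecs M. \<forall>b' \<in> vecs M. \<forall>s \<in> vecs M. \<forall>s' \<in> vecs M.
      (\<Sum>i = 1..M. r b s' i * b i) \<ge> (\<Sum>i = 1..M. r b' s' i * b i) \<and>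
      (\<Sum>i = 1..M. r b' s i * s i) \<ge> (\<Sum>i = 1..M. r b' s' i * s i))"

definition gain :: "nat \<Rightarrow> ((nat \<Rightarrow> real) \<Rightarrow> (nat \<Rightarrow> real) \<Rightarrow> nat \<Rightarrow> real)
    \<Rightarrow> (nat \<Rightarrow> real) \<Rightarrow> (nat \<Rightarrow> real) \<Rightarrow> real" where
  "gain M r b s = (\<Sum>i = 1..M. r b s i * (b i + s i))"

definition competitive_ratio :: "nat \<Rightarrow> ((nat \<Rightarrow> real) \<Rightarrow> (nat \<Rightarrow> real) \<Rightarrow> nat \<Rightarrow> real) \<Rightarrow> ereal" where
  "competitive_ratio M r =
     (INF p \<in> {(b, s). b \<in> vecs M \<and> s \<in> vecs M \<and> OPT M b s > 0}.
        ereal (gain M r (fst p) (snd p) / OPT M (fst p) (snd p)))"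

end

theory Submission
  imports Defs
begin

text \<open>
  Let r be DSIC with ratio c > 0. If every option outside a set F has total utility at most
  -T while utilities on F lie in [0, K], then the options outside F receive probability at most
  2K/T, since otherwise the gain would be negative.

  For nonnegative, pairwise non-proportional utility pairs (x i, y i) on F, induction on |F| plus
  the number of options where both are positive shows: as T grows, the buyer's expected utility
  from F is asymptotically at least c times the sum of x over F, and the seller's at least c times
  the sum of y. For the buyer: if y vanishes, F is a single option and the ratio bound applies
  directly; otherwise drop an option with x i = 0, or replace x by x - \<mu> y with \<mu> chosen
  maximal. By induction, reporting x - \<mu> y gives her true utility (x - \<mu> y) + \<mu> y of
  about c times the sum of x, and DSIC transfers this to the truthful report. The seller's claim
  is the buyer's for the mechanism with the roles exchanged.

  With x i = M + 1 - i and y i = i on all M options both bounds add up to c M (M + 1), whereas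
  x i + y i = M + 1 for every option, so c M (M + 1) \<le> M + 1.
\<close>

definition competitive_DSIC ::
    "nat \<Rightarrow> real \<Rightarrow> ((nat \<Rightarrow> real) \<Rightarrow> (nat \<Rightarrow> real) \<Rightarrow> nat \<Rightarrow> real) \<Rightarrow> bool" where
  "competitive_DSIC M c r \<longleftrightarrow> mechanism M r \<and> DSIC M r \<and>
     (\<forall>b\<in>vecs M. \<forall>s\<in>vecs M. 0 < OPT M b s \<longrightarrow> c * OPT M b s \<le> gain M r b s)"

definition admissible :: "nat \<Rightarrow> real \<Rightarrow> nat set \<Rightarrow> (nat \<Rightarrow> real) \<Rightarrow> (nat \<Rightarrow> real) \<Rightarrow> bool" where
  "admissible M K F x y \<longleftrightarrow> F \<subseteq> {1..M} \<and> F \<noteq> {} \<and>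
     (\<forall>i\<in>F. 0 \<le> x i \<and> x i \<le> K \<and> 0 \<le> y i \<and> y i \<le> K \<and> (0 < x i \<or> 0 < y i)) \<and>
     (\<forall>i\<in>F. \<forall>j\<in>F. i \<noteq> j \<longrightarrow> x i * y j \<noteq> x j * y i)"

definition padded_profile :: "nat \<Rightarrow> real \<Rightarrow> nat set \<Rightarrow> (nat \<Rightarrow> real) \<Rightarrow> (nat \<Rightarrow> real) \<Rightarrow> real
    \<Rightarrow> (nat \<Rightarrow> real) \<Rightarrow> (nat \<Rightarrow> real) \<Rightarrow> bool" where
  "padded_profile M K F x y T b s \<longleftrightarrow> b \<in> vecs M \<and> s \<in> vecs M \<and>
     (\<forall>i\<in>F. b i = x i \<and> s i = y i) \<and>
     (\<forall>j\<in>{1..M} - F. b j \<le> K \<and> s j \<le> K \<and> b j + s j \<le> - T)"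

definition guarantees :: "nat \<Rightarrow> real \<Rightarrow> real \<Rightarrow> ((nat \<Rightarrow> real) \<Rightarrow> (nat \<Rightarrow> real) \<Rightarrow> nat \<Rightarrow> real)
    \<Rightarrow> nat set \<Rightarrow> (nat \<Rightarrow> real) \<Rightarrow> (nat \<Rightarrow> real) \<Rightarrow> (nat \<Rightarrow> real) \<Rightarrow> bool" where
  "guarantees M K c r F x y w \<longleftrightarrow> (\<forall>\<epsilon>>0. \<exists>T. \<forall>b s. padded_profile M K F x y T b s \<longrightarrow>
     c * (\<Sum>i\<in>F. w i) - \<epsilon> \<le> (\<Sum>i\<in>F. w i * r b s i))"

lemma padded_profile_mono:
  "padded_profile M K F x y T' b s \<Longrightarrow> T \<le> T' \<Longrightarrow> padded_profile M K F x y T b s"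
  unfolding padded_profile_def by force

lemma padded_profile_swap:
  "padded_profile M K F y x T s b \<longleftrightarrow> padded_profile M K F x y T b s"
  unfolding padded_profile_def by (auto simp: add.commute)

lemma admissible_swap: "admissible M K F x y \<Longrightarrow> admissible M K F y x"
  unfolding admissible_def by (simp add: mult.commute) (metis mult.commute)

lemma OPT_ge_option:
  assumes "i \<in> {1..M}" "0 \<le> b i" "0 \<le> s i"
  shows "b i + s i \<le> OPT M b s"
proof -
  have "i \<in> Feasible M b s" using assms unfolding Feasible_def by auto
  moreover have "finite (Feasible M b s)" unfolding Feasible_def by auto
  ultimately show ?thesis unfolding OPT_def by (intro Max_ge) auto
qed

lemma OPT_swap: "OPT M s b = OPT M b s"
proof -
  have "(\<lambda>i. s i + b i) ` Feasible M s b = (\<lambda>i. b i + s i) ` Feasible M b s"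
    unfolding Feasible_def by (auto simp: add.commute)
  then show ?thesis unfolding OPT_def by simp
qed

lemma mechanism_nonneg:
  "mechanism M r \<Longrightarrow> b \<in> vecs M \<Longrightarrow> s \<in> vecs M \<Longrightarrow> i \<in> {0..M} \<Longrightarrow> 0 \<le> r b s i"
  unfolding mechanism_def by blast

lemma mechanism_sum_le_one:
  assumes "mechanism M r" "b \<in> vecs M" "s \<in> vecs M" "A \<subseteq> {0..M}"
  shows "(\<Sum>i\<in>A. r b s i) \<le> 1"
proof -
  have "(\<Sum>i\<in>A. r b s i) \<le> (\<Sum>i = 0..M. r b s i)"
    using assms mechanism_nonneg by (intro sum_mono2) auto
  also have "\<dots> = 1" using assms unfolding mechanism_def by blast
  finally show ?thesis .
qed

lemma competitive_DSIC_swap: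
  assumes "competitive_DSIC M c r"
  shows "competitive_DSIC M c (\<lambda>b s. r s b)"
proof -
  have "mechanism M r" and dsic: "DSIC M r"
    and ratio: "\<forall>b\<in>vecs M. \<forall>s\<in>vecs M. 0 < OPT M b s \<longrightarrow> c * OPT M b s \<le> gain M r b s"
    using assms unfolding competitive_DSIC_def by auto
  then have "mechanism M (\<lambda>b s. r s b)" unfolding mechanism_def by blast
  moreover have "DSIC M (\<lambda>b s. r s b)"
    using dsic unfolding DSIC_def by blast
  moreover have "gain M (\<lambda>b s. r s b) b s = gain M r s b" for b s
    unfolding gain_def by (simp add: add.commute)
  moreover have "c * OPT M b s \<le> gain M r s b" if "b \<in> vecs M" "s \<in> vecs M" "0 < OPT M b s" for b s
    using ratio that by (metis OPT_swap)
  ultimately show ?thesis unfolding competitive_DSIC_def by simp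
qed

lemma gain_split:
  "F \<subseteq> {1..M} \<Longrightarrow> gain M r b s =
     (\<Sum>i\<in>F. r b s i * (b i + s i)) + (\<Sum>i\<in>{1..M} - F. r b s i * (b i + s i))"
  unfolding gain_def by (simp add: sum.subset_diff)

lemma padded_profile_off_gain_le:
  assumes "mechanism M r" "padded_profile M K F x y T b s"
  shows "(\<Sum>i\<in>{1..M} - F. r b s i * (b i + s i)) \<le> - T * (\<Sum>i\<in>{1..M} - F. r b s i)"
proof -
  have "(\<Sum>i\<in>{1..M} - F. r b s i * (b i + s i)) \<le> (\<Sum>i\<in>{1..M} - F. r b s i * - T)"
    using assms mechanism_nonneg unfolding padded_profile_def
    by (intro sum_mono mult_left_mono) auto
  also have "\<dots> = - T * (\<Sum>i\<in>{1..M} - F. r b s i)"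
    by (simp add: sum_distrib_left mult.commute)
  finally show ?thesis .
qed

lemma admissible_bound_nonneg: "admissible M K F x y \<Longrightarrow> 0 \<le> K"
  unfolding admissible_def by force

lemma admissible_OPT_pos:
  assumes "admissible M K F x y" "padded_profile M K F x y T b s"
  shows "0 < OPT M b s"
proof -
  obtain i where i: "i \<in> F" using assms(1) unfolding admissible_def by blast
  then have "0 < b i + s i" "0 \<le> b i" "0 \<le> s i" "i \<in> {1..M}"
    using assms unfolding admissible_def padded_profile_def by force+
  with OPT_ge_option[of i M b s] show ?thesis by linarith
qed

text \<open>The ratio bound makes the gain nonnegative, and options of total utility at most -T
  would make it negative if they carried more probability.\<close>
lemma padded_profile_off_mass_le:
  assumes comp: "competitive_DSIC M c r" and "0 \<le> c" and adm: "admissible M K F x y"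
    and pad: "padded_profile M K F x y T b s" and "0 < T"
  shows "(\<Sum>j\<in>{1..M} - F. r b s j) \<le> 2 * K / T"
proof -
  have mech: "mechanism M r" using comp unfolding competitive_DSIC_def by blast
  have F: "F \<subseteq> {1..M}" and bs: "b \<in> vecs M" "s \<in> vecs M"
    using adm pad unfolding admissible_def padded_profile_def by auto
  have nonneg: "\<And>i. i \<in> F \<Longrightarrow> 0 \<le> r b s i" using F mechanism_nonneg[OF mech bs] by auto
  have "b i + s i \<le> 2 * K" if "i \<in> F" for i
    using that adm pad unfolding admissible_def padded_profile_def by force
  then have "(\<Sum>i\<in>F. r b s i * (b i + s i)) \<le> (\<Sum>i\<in>F. r b s i * (2 * K))"
    using nonneg by (intro sum_mono mult_left_mono) auto
  also have "\<dots> = (\<Sum>i\<in>F. r b s i) * (2 * K)" by (simp add: sum_distrib_right)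
  also have "\<dots> \<le> 2 * K"
  proof (rule mult_left_le_one_le)
    show "0 \<le> 2 * K" using admissible_bound_nonneg[OF adm] by simp
    show "0 \<le> (\<Sum>i\<in>F. r b s i)" using nonneg by (simp add: sum_nonneg)
    show "(\<Sum>i\<in>F. r b s i) \<le> 1" using F by (intro mechanism_sum_le_one[OF mech bs]) auto
  qed
  finally have on_F: "(\<Sum>i\<in>F. r b s i * (b i + s i)) \<le> 2 * K" .
  have "0 \<le> c * OPT M b s" using \<open>0 \<le> c\<close> admissible_OPT_pos[OF adm pad] by simp
  also have "\<dots> \<le> gain M r b s"
    using comp bs admissible_OPT_pos[OF adm pad] unfolding competitive_DSIC_def by blast
  also have "\<dots> \<le> 2 * K - T * (\<Sum>j\<in>{1..M} - F. r b s j)"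
    using gain_split[OF F] on_F padded_profile_off_gain_le[OF mech pad] by simp
  finally show ?thesis using \<open>0 < T\<close> by (simp add: field_simps)
qed

lemma guarantees_zero_weight: "\<forall>i\<in>F. w i = 0 \<Longrightarrow> guarantees M K c r F x y w"
  unfolding guarantees_def by simp

lemma guarantees_singleton:
  assumes comp: "competitive_DSIC M c r" and "0 \<le> c" and adm: "admissible M K {i} x y"
    and "y i = 0"
  shows "guarantees M K c r {i} x y x"
  unfolding guarantees_def
proof (intro allI impI exI[of _ 0])
  fix \<epsilon> :: real and b s assume "0 < \<epsilon>" and pad: "padded_profile M K {i} x y 0 b s"
  have mech: "mechanism M r" using comp unfolding competitive_DSIC_def by blast
  have i: "i \<in> {1..M}" "0 \<le> x i" and bs: "b \<in> vecs M" "s \<in> vecs M" and "b i = x i" "s i = 0"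
    using adm pad \<open>y i = 0\<close> unfolding admissible_def padded_profile_def by auto
  have "c * x i \<le> c * OPT M b s"
    using OPT_ge_option[of i M b s] \<open>0 \<le> c\<close> i \<open>b i = x i\<close> \<open>s i = 0\<close>
    by (intro mult_left_mono) auto
  also have "\<dots> \<le> gain M r b s"
    using comp bs admissible_OPT_pos[OF adm pad] unfolding competitive_DSIC_def by blast
  also have "\<dots> \<le> r b s i * x i"
    using gain_split[of "{i}"] i padded_profile_off_gain_le[OF mech pad] \<open>b i = x i\<close> \<open>s i = 0\<close>
      mechanism_nonneg[OF mech bs]
    by (simp add: mult_nonneg_nonneg)
  finally show "c * (\<Sum>i\<in>{i}. x i) - \<epsilon> \<le> (\<Sum>i\<in>{i}. x i * r b s i)"
    using \<open>0 < \<epsilon>\<close> by (simp add: mult.commute)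
qed

lemma guarantees_swap:
  assumes "guarantees M K c (\<lambda>b s. r s b) F y x y"
  shows "guarantees M K c r F x y y"
  unfolding guarantees_def
proof (intro allI impI)
  fix \<epsilon> :: real assume "0 < \<epsilon>"
  then obtain T where "\<forall>s b. padded_profile M K F y x T s b \<longrightarrow>
      c * (\<Sum>i\<in>F. y i) - \<epsilon> \<le> (\<Sum>i\<in>F. y i * r b s i)"
    using assms unfolding guarantees_def by blast
  then show "\<exists>T. \<forall>b s. padded_profile M K F x y T b s \<longrightarrow>
      c * (\<Sum>i\<in>F. y i) - \<epsilon> \<le> (\<Sum>i\<in>F. y i * r b s i)"
    using padded_profile_swap by blast
qed

lemma guarantees_limit:
  assumes "guarantees M K c r F x y w" "\<And>T. padded_profile M K F x y T b s"
  shows "c * (\<Sum>i\<in>F. w i) \<le> (\<Sum>i\<in>F. w i * r b s i)"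
proof (rule field_le_epsilon)
  fix \<epsilon> :: real assume "0 < \<epsilon>"
  then obtain T where "\<forall>b s. padded_profile M K F x y T b s \<longrightarrow>
      c * (\<Sum>i\<in>F. w i) - \<epsilon> \<le> (\<Sum>i\<in>F. w i * r b s i)"
    using assms(1) unfolding guarantees_def by blast
  then show "c * (\<Sum>i\<in>F. w i) \<le> (\<Sum>i\<in>F. w i * r b s i) + \<epsilon>"
    using assms(2) by fastforce
qed

lemma sum_split_subset:
  fixes f :: "nat \<Rightarrow> real"
  shows "F \<subseteq> {1..M} \<Longrightarrow> (\<Sum>i = 1..M. f i) = (\<Sum>i\<in>F. f i) + (\<Sum>i\<in>{1..M} - F. f i)"
  by (simp add: sum.subset_diff)

lemma expected_utility_le_padded:
  assumes comp: "competitive_DSIC M c r" and "0 \<le> c" and adm: "admissible M K F x y"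
    and pad: "padded_profile M K F x y T b s" and "0 < T"
  shows "(\<Sum>i = 1..M. r b s i * b i) \<le> (\<Sum>i\<in>F. x i * r b s i) + K * (2 * K / T)"
proof -
  have mech: "mechanism M r" using comp unfolding competitive_DSIC_def by blast
  have F: "F \<subseteq> {1..M}" and bs: "b \<in> vecs M" "s \<in> vecs M"
    using adm pad unfolding admissible_def padded_profile_def by auto
  have "(\<Sum>i\<in>F. r b s i * b i) = (\<Sum>i\<in>F. x i * r b s i)"
    using pad unfolding padded_profile_def by (simp add: mult.commute)
  moreover have "(\<Sum>i\<in>{1..M} - F. r b s i * b i) \<le> (\<Sum>i\<in>{1..M} - F. r b s i * K)"
    using pad mechanism_nonneg[OF mech bs] unfolding padded_profile_def
    by (intro sum_mono mult_left_mono) auto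
  moreover have "(\<Sum>i\<in>{1..M} - F. r b s i * K) = K * (\<Sum>j\<in>{1..M} - F. r b s j)"
    by (simp add: sum_distrib_left mult.commute)
  moreover have "K * (\<Sum>j\<in>{1..M} - F. r b s j) \<le> K * (2 * K / T)"
    using padded_profile_off_mass_le[OF assms] admissible_bound_nonneg[OF adm] by (rule mult_left_mono)
  ultimately show ?thesis using sum_split_subset[OF F, of "\<lambda>i. r b s i * b i"] by linarith
qed

lemma expected_utility_ge_padded:
  assumes comp: "competitive_DSIC M c r" and "0 \<le> c" and adm: "admissible M K F x y"
    and pad: "padded_profile M K F x y T b s" and "0 < T"
  shows "(\<Sum>i\<in>F. v i * r b s i) - (\<Sum>j\<in>{1..M} - F. \<bar>v j\<bar>) * (2 * K / T)
    \<le> (\<Sum>i = 1..M. r b s i * v i)"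
proof -
  have mech: "mechanism M r" using comp unfolding competitive_DSIC_def by blast
  have F: "F \<subseteq> {1..M}" and bs: "b \<in> vecs M" "s \<in> vecs M"
    using adm pad unfolding admissible_def padded_profile_def by auto
  let ?m = "\<Sum>j\<in>{1..M} - F. r b s j"
  have "?m \<le> 2 * K / T" by (rule padded_profile_off_mass_le[OF assms])
  have "- (\<bar>v j\<bar> * (2 * K / T)) \<le> r b s j * v j" if j: "j \<in> {1..M} - F" for j
  proof -
    have "0 \<le> r b s j" "r b s j \<le> ?m"
      using j mechanism_nonneg[OF mech bs] by (auto intro: member_le_sum)
    then have "\<bar>v j\<bar> * r b s j \<le> \<bar>v j\<bar> * (2 * K / T)"
      using \<open>?m \<le> 2 * K / T\<close> by (intro mult_left_mono) auto
    moreover have "- (\<bar>v j\<bar> * r b s j) \<le> r b s j * v j"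
      using \<open>0 \<le> r b s j\<close> by (auto simp: abs_if mult.commute)
    ultimately show ?thesis by linarith
  qed
  then have "(\<Sum>j\<in>{1..M} - F. - (\<bar>v j\<bar> * (2 * K / T))) \<le> (\<Sum>j\<in>{1..M} - F. r b s j * v j)"
    by (rule sum_mono)
  then have "- ((\<Sum>j\<in>{1..M} - F. \<bar>v j\<bar>) * (2 * K / T)) \<le> (\<Sum>j\<in>{1..M} - F. r b s j * v j)"
    by (simp only: sum_negf sum_distrib_right)
  moreover have "(\<Sum>i\<in>F. r b s i * v i) = (\<Sum>i\<in>F. v i * r b s i)" by (simp add: mult.commute)
  ultimately show ?thesis using sum_split_subset[OF F, of "\<lambda>i. r b s i * v i"] by linarith
qed

lemma padded_profile_deviation:
  assumes adm: "admissible M K F x y" and pad: "padded_profile M K F x y T b s"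
    and "F' \<subseteq> F" and "0 \<le> L"
  shows "padded_profile M K F' x' y L
    (\<lambda>i. if i \<in> F' then x' i else if i \<in> {1..M} then - (K + L) else 0) s"
proof -
  have "s j \<le> K" if "j \<in> {1..M}" for j
    using that adm pad unfolding admissible_def padded_profile_def by (cases "j \<in> F") auto
  then show ?thesis
    using assms admissible_bound_nonneg[OF adm] unfolding padded_profile_def admissible_def vecs_def
    by auto
qed

lemma guarantees_add_scaled:
  assumes gw: "guarantees M K c r F x y w" and gw': "guarantees M K c r F x y w'" and "0 \<le> \<mu>"
  shows "guarantees M K c r F x y (\<lambda>i. w i + \<mu> * w' i)"
  unfolding guarantees_def
proof (intro allI impI)
  fix \<epsilon> :: real assume "0 < \<epsilon>"
  obtain T where T: "\<forall>b s. padded_profile M K F x y T b s \<longrightarrow>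
      c * (\<Sum>i\<in>F. w i) - \<epsilon> / 2 \<le> (\<Sum>i\<in>F. w i * r b s i)"
    using gw \<open>0 < \<epsilon>\<close> unfolding guarantees_def by (meson half_gt_zero)
  have "0 < \<epsilon> / (2 * (\<mu> + 1))" using \<open>0 < \<epsilon>\<close> \<open>0 \<le> \<mu>\<close> by simp
  then obtain T' where T': "\<forall>b s. padded_profile M K F x y T' b s \<longrightarrow>
      c * (\<Sum>i\<in>F. w' i) - \<epsilon> / (2 * (\<mu> + 1)) \<le> (\<Sum>i\<in>F. w' i * r b s i)"
    using gw' unfolding guarantees_def by blast
  have "\<mu> * (\<epsilon> / (2 * (\<mu> + 1))) \<le> \<epsilon> / 2"
    using \<open>0 < \<epsilon>\<close> \<open>0 \<le> \<mu>\<close> by (simp add: field_simps)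
  moreover have "c * (\<Sum>i\<in>F. w i + \<mu> * w' i) = c * (\<Sum>i\<in>F. w i) + \<mu> * (c * (\<Sum>i\<in>F. w' i))"
    "(\<Sum>i\<in>F. (w i + \<mu> * w' i) * r b s i) = (\<Sum>i\<in>F. w i * r b s i) + \<mu> * (\<Sum>i\<in>F. w' i * r b s i)"
    for b s
    by (simp_all add: sum.distrib sum_distrib_left algebra_simps)
  moreover have "\<mu> * (c * (\<Sum>i\<in>F. w' i)) - \<mu> * (\<epsilon> / (2 * (\<mu> + 1))) \<le> \<mu> * (\<Sum>i\<in>F. w' i * r b s i)"
    if "padded_profile M K F x y T' b s" for b s
  proof -
    have "\<mu> * (c * (\<Sum>i\<in>F. w' i) - \<epsilon> / (2 * (\<mu> + 1))) \<le> \<mu> * (\<Sum>i\<in>F. w' i * r b s i)"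
      using T' that \<open>0 \<le> \<mu>\<close> by (simp add: mult_left_mono)
    then show ?thesis by (simp add: right_diff_distrib)
  qed
  ultimately have "c * (\<Sum>i\<in>F. w i + \<mu> * w' i) - \<epsilon> \<le> (\<Sum>i\<in>F. (w i + \<mu> * w' i) * r b s i)"
    if "padded_profile M K F x y (max T T') b s" for b s
    using T padded_profile_mono[OF that max.cobounded1] padded_profile_mono[OF that max.cobounded2]
    by fastforce
  then show "\<exists>T. \<forall>b s. padded_profile M K F x y T b s \<longrightarrow>
      c * (\<Sum>i\<in>F. w i + \<mu> * w' i) - \<epsilon> \<le> (\<Sum>i\<in>F. (w i + \<mu> * w' i) * r b s i)"
    by blast
qed

text \<open>The deviation: a buyer with true values x reports x' on F' and very negative values
  elsewhere, which by assumption earns her about c times the sum of x over F; by DSIC,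
  truthful reporting earns at least as much.\<close>
lemma guarantees_deviation:
  assumes comp: "competitive_DSIC M c r" and "0 \<le> c"
    and adm: "admissible M K F x y" and adm': "admissible M K F' x' y" and "F' \<subseteq> F"
    and zero: "\<forall>i\<in>F - F'. x i = 0" and g: "guarantees M K c r F' x' y x"
  shows "guarantees M K c r F x y x"
  unfolding guarantees_def
proof (intro allI impI)
  fix \<epsilon> :: real assume "0 < \<epsilon>"
  have dsic: "DSIC M r" using comp unfolding competitive_DSIC_def by auto
  have F: "F \<subseteq> {1..M}" and "0 \<le> K"
    using adm admissible_bound_nonneg[OF adm] unfolding admissible_def by auto
  obtain T' where T': "\<And>b s. padded_profile M K F' x' y T' b s \<Longrightarrow>
      c * (\<Sum>i\<in>F'. x i) - \<epsilon> / 2 \<le> (\<Sum>i\<in>F'. x i * r b s i)"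
    using g \<open>0 < \<epsilon>\<close> unfolding guarantees_def by (meson half_gt_zero)
  have sum_F: "(\<Sum>i\<in>F. x i) = (\<Sum>i\<in>F'. x i)"
    using F \<open>F' \<subseteq> F\<close> zero by (intro sum.mono_neutral_right) (auto intro: finite_subset)
  define T where "T = 8 * K\<^sup>2 / \<epsilon> + 1"
  have "0 < T" unfolding T_def using \<open>0 < \<epsilon>\<close> by (simp add: add_nonneg_pos)
  have "8 * K\<^sup>2 \<le> \<epsilon> * T" unfolding T_def using \<open>0 < \<epsilon>\<close> by (simp add: field_simps)
  then have "K * (2 * K / T) \<le> \<epsilon> / 4" using \<open>0 < T\<close> by (simp add: field_simps power2_eq_square)
  have "c * (\<Sum>i\<in>F. x i) - \<epsilon> \<le> (\<Sum>i\<in>F. x i * r b s i)"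
    if pad: "padded_profile M K F x y T b s" for b s
  proof -
    have bs: "b \<in> vecs M" "s \<in> vecs M" and bx: "\<forall>i\<in>F. b i = x i"
      using pad unfolding padded_profile_def by auto
    define B where "B = (\<Sum>j\<in>{1..M} - F'. \<bar>b j\<bar>)"
    define L where "L = max T' (8 * K * B / \<epsilon> + 1)"
    define b' where "b' = (\<lambda>i. if i \<in> F' then x' i else if i \<in> {1..M} then - (K + L) else 0)"
    have "0 \<le> B" unfolding B_def by (simp add: sum_nonneg)
    then have "0 \<le> 8 * K * B / \<epsilon>" using \<open>0 < \<epsilon>\<close> \<open>0 \<le> K\<close> by simp
    then have "0 < L" unfolding L_def by linarith
    have pad': "padded_profile M K F' x' y L b' s"
      unfolding b'_def using padded_profile_deviation[OF adm pad \<open>F' \<subseteq> F\<close>] \<open>0 < L\<close> by simp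
    have truthful: "(\<Sum>i = 1..M. r b s i * b i) \<le> (\<Sum>i\<in>F. x i * r b s i) + \<epsilon> / 4"
      using expected_utility_le_padded[OF comp \<open>0 \<le> c\<close> adm pad \<open>0 < T\<close>]
        \<open>K * (2 * K / T) \<le> \<epsilon> / 4\<close> by linarith
    have "B * (2 * K / L) \<le> \<epsilon> / 4"
      using \<open>0 < \<epsilon>\<close> \<open>0 < L\<close> \<open>0 \<le> B\<close> \<open>0 \<le> K\<close> unfolding L_def by (simp add: field_simps max_def)
    moreover have "(\<Sum>i\<in>F'. b i * r b' s i) = (\<Sum>i\<in>F'. x i * r b' s i)"
      using bx \<open>F' \<subseteq> F\<close> by (intro sum.cong) auto
    ultimately have deviation: "(\<Sum>i\<in>F'. x i * r b' s i) - \<epsilon> / 4 \<le> (\<Sum>i = 1..M. r b' s i * b i)"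
      using expected_utility_ge_padded[OF comp \<open>0 \<le> c\<close> adm' pad' \<open>0 < L\<close>, of b, folded B_def]
      by linarith
    have "(\<Sum>i = 1..M. r b' s i * b i) \<le> (\<Sum>i = 1..M. r b s i * b i)"
      using dsic bs pad' unfolding DSIC_def padded_profile_def by blast
    moreover have "c * (\<Sum>i\<in>F. x i) - \<epsilon> / 2 \<le> (\<Sum>i\<in>F'. x i * r b' s i)"
      using T' padded_profile_mono[OF pad'] sum_F unfolding L_def by simp
    ultimately show ?thesis using truthful deviation by linarith
  qed
  then show "\<exists>T. \<forall>b s. padded_profile M K F x y T b s \<longrightarrow>
      c * (\<Sum>i\<in>F. x i) - \<epsilon> \<le> (\<Sum>i\<in>F. x i * r b s i)"
    by blast
qed

text \<open>Subtracting the largest multiple of y that keeps x nonnegative creates a zero of x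
  at an option where y is positive.\<close>
lemma admissible_shift:
  assumes adm: "admissible M K F x y" and xpos: "\<forall>i\<in>F. 0 < x i" and "\<exists>i\<in>F. 0 < y i"
  obtains \<mu> where "0 \<le> \<mu>" "admissible M K F (\<lambda>i. x i - \<mu> * y i) y"
    "card {i\<in>F. 0 < x i - \<mu> * y i \<and> 0 < y i} < card {i\<in>F. 0 < x i \<and> 0 < y i}"
proof -
  have "finite F" and y: "\<forall>i\<in>F. 0 \<le> y i \<and> y i \<le> K"
    using adm finite_subset unfolding admissible_def by auto
  define G where "G = {i\<in>F. 0 < y i}"
  have "finite G" "G \<noteq> {}" unfolding G_def using \<open>finite F\<close> assms(3) by auto
  define \<mu> where "\<mu> = Min ((\<lambda>i. x i / y i) ` G)"
  have "\<mu> \<in> (\<lambda>i. x i / y i) ` G" unfolding \<mu>_def using \<open>finite G\<close> \<open>G \<noteq> {}\<close> by (intro Min_in) auto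
  then obtain j where j: "j \<in> F" "0 < y j" "\<mu> = x j / y j" unfolding G_def by auto
  have "0 \<le> \<mu>" using j xpos by (simp add: less_imp_le)
  have \<mu>_le: "\<mu> * y i \<le> x i" if "i \<in> F" for i
  proof (cases "0 < y i")
    case True
    then have "\<mu> \<le> x i / y i" unfolding \<mu>_def using \<open>finite G\<close> that by (intro Min_le) (auto simp: G_def)
    then show ?thesis using True by (simp add: le_divide_eq)
  next
    case False
    then have "y i = 0" using that y by force
    then show ?thesis using that xpos by (simp add: less_imp_le)
  qed
  have "admissible M K F (\<lambda>i. x i - \<mu> * y i) y"
    unfolding admissible_def
  proof (intro conjI ballI impI)
    fix i assume "i \<in> F"
    then have "0 \<le> y i" "0 \<le> \<mu> * y i" "x i \<le> K" "0 < x i"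
      using \<open>0 \<le> \<mu>\<close> y adm xpos unfolding admissible_def by auto
    then show "0 \<le> x i - \<mu> * y i" "x i - \<mu> * y i \<le> K" "0 < x i - \<mu> * y i \<or> 0 < y i"
      using \<mu>_le[OF \<open>i \<in> F\<close>] by (auto simp: le_less)
  next
    fix i j assume "i \<in> F" "j \<in> F" "i \<noteq> j"
    then show "(x i - \<mu> * y i) * y j \<noteq> (x j - \<mu> * y j) * y i"
      using adm unfolding admissible_def by (simp add: algebra_simps)
  qed (use adm y in \<open>auto simp: admissible_def\<close>)
  moreover have "x j - \<mu> * y j = 0" using j by simp
  then have "{i\<in>F. 0 < x i - \<mu> * y i \<and> 0 < y i} \<subset> {i\<in>F. 0 < x i \<and> 0 < y i}"
    using j xpos by force
  then have "card {i\<in>F. 0 < x i - \<mu> * y i \<and> 0 < y i} < card {i\<in>F. 0 < x i \<and> 0 < y i}"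
    using \<open>finite F\<close> by (intro psubset_card_mono) auto
  ultimately show ?thesis using that \<open>0 \<le> \<mu>\<close> by blast
qed

lemma guarantees_buyer_step:
  assumes comp: "competitive_DSIC M c r" and "0 \<le> c" and adm: "admissible M K F x y"
    and IH: "\<And>F' x'. admissible M K F' x' y \<Longrightarrow>
      card F' + card {i\<in>F'. 0 < x' i \<and> 0 < y i} < card F + card {i\<in>F. 0 < x i \<and> 0 < y i} \<Longrightarrow>
      guarantees M K c r F' x' y x' \<and> guarantees M K c r F' x' y y"
  shows "guarantees M K c r F x y x"
proof -
  have "finite F" using adm finite_subset unfolding admissible_def by auto
  consider (zero) j where "j \<in> F" "x j = 0"
    | (y_zero) "\<forall>i\<in>F. 0 < x i" "\<forall>i\<in>F. y i = 0"
    | (shift) "\<forall>i\<in>F. 0 < x i" "\<exists>i\<in>F. 0 < y i"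
    using adm unfolding admissible_def by force
  then show ?thesis
  proof cases
    case zero
    show ?thesis
    proof (cases "F = {j}")
      case True
      then show ?thesis using zero by (intro guarantees_zero_weight) simp
    next
      case False
      then have adm': "admissible M K (F - {j}) x y"
        using adm zero unfolding admissible_def by blast
      have "card (F - {j}) < card F" using \<open>finite F\<close> zero by (intro card_Diff1_less)
      moreover have "card {i\<in>F - {j}. 0 < x i \<and> 0 < y i} \<le> card {i\<in>F. 0 < x i \<and> 0 < y i}"
        using \<open>finite F\<close> by (intro card_mono) auto
      ultimately have "guarantees M K c r (F - {j}) x y x" using IH[OF adm'] by simp
      moreover have "\<forall>i\<in>F - (F - {j}). x i = 0" using zero by auto
      ultimately show ?thesis by (intro guarantees_deviation[OF comp \<open>0 \<le> c\<close> adm adm']) auto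
    qed
  next
    case y_zero
    \<comment> \<open>pairwise non-proportionality forces a single option\<close>
    then obtain i where "F = {i}"
      using adm unfolding admissible_def by (metis mult_zero_right insert_iff subsetI subset_singletonD)
    then show ?thesis using guarantees_singleton[OF comp \<open>0 \<le> c\<close>] adm y_zero by simp
  next
    case shift
    then obtain \<mu> where "0 \<le> \<mu>" and adm': "admissible M K F (\<lambda>i. x i - \<mu> * y i) y"
      and "card {i\<in>F. 0 < x i - \<mu> * y i \<and> 0 < y i} < card {i\<in>F. 0 < x i \<and> 0 < y i}"
      using admissible_shift[OF adm] by blast
    then have "guarantees M K c r F (\<lambda>i. x i - \<mu> * y i) y (\<lambda>i. x i - \<mu> * y i)"
      "guarantees M K c r F (\<lambda>i. x i - \<mu> * y i) y y"
      using IH[OF adm'] by auto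
    then have "guarantees M K c r F (\<lambda>i. x i - \<mu> * y i) y (\<lambda>i. (x i - \<mu> * y i) + \<mu> * y i)"
      using guarantees_add_scaled \<open>0 \<le> \<mu>\<close> by blast
    then show ?thesis using guarantees_deviation[OF comp \<open>0 \<le> c\<close> adm adm'] by simp
  qed
qed

lemma guarantees_admissible:
  assumes "competitive_DSIC M c r" "0 \<le> c" "admissible M K F x y"
  shows "guarantees M K c r F x y x \<and> guarantees M K c r F x y y"
  using assms
proof (induction "card F + card {i\<in>F. 0 < x i \<and> 0 < y i}" arbitrary: r F x y rule: less_induct)
  case less
  have "guarantees M K c r F x y x"
    using guarantees_buyer_step[OF less.prems] less.hyps less.prems by blast
  moreover have "guarantees M K c (\<lambda>b s. r s b) F y x y"
  proof (rule guarantees_buyer_step)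
    show "competitive_DSIC M c (\<lambda>b s. r s b)" by (rule competitive_DSIC_swap[OF less.prems(1)])
    show "admissible M K F y x" by (rule admissible_swap[OF less.prems(3)])
    fix F' y' assume "admissible M K F' y' x"
      "card F' + card {i\<in>F'. 0 < y' i \<and> 0 < x i} < card F + card {i\<in>F. 0 < y i \<and> 0 < x i}"
    then show "guarantees M K c (\<lambda>b s. r s b) F' y' x y' \<and> guarantees M K c (\<lambda>b s. r s b) F' y' x x"
      using less.hyps competitive_DSIC_swap[OF less.prems(1)] less.prems(2) by (simp add: conj_commute)
  qed (rule less.prems(2))
  ultimately show ?case using guarantees_swap by blast
qed

lemma admissible_staircase:
  assumes "1 \<le> M"
  shows "admissible M (real M) {1..M} (\<lambda>i. real M + 1 - real i) real"
  unfolding admissible_def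
proof (intro conjI ballI impI)
  fix i j assume "i \<in> {1..M}" "j \<in> {1..M}" "i \<noteq> j"
  then have "(real M + 1) * (real j - real i) \<noteq> 0" by simp
  then show "(real M + 1 - real i) * real j \<noteq> (real M + 1 - real j) * real i"
    by (simp add: algebra_simps)
qed (use assms in auto)

lemma competitive_DSIC_le_inverse:
  assumes "1 \<le> M" and comp: "competitive_DSIC M c r" and "0 \<le> c"
  shows "c \<le> 1 / real M"
proof -
  define x where "x = (\<lambda>i. real M + 1 - real i)"
  define b where "b = (\<lambda>i. if i \<in> {1..M} then x i else 0)"
  define s where "s = (\<lambda>i. if i \<in> {1..M} then real i else 0)"
  have adm: "admissible M (real M) {1..M} x real"
    unfolding x_def using admissible_staircase[OF \<open>1 \<le> M\<close>] .
  have pad: "padded_profile M (real M) {1..M} x real T b s" for T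
    unfolding padded_profile_def b_def s_def vecs_def by auto
  have mech: "mechanism M r" using comp unfolding competitive_DSIC_def by blast
  have bs: "b \<in> vecs M" "s \<in> vecs M" using pad[of 0] unfolding padded_profile_def by auto
  have sum_xy: "x i + real i = real M + 1" for i unfolding x_def by simp
  have "c * real M * (real M + 1) = c * (\<Sum>i\<in>{1..M}. x i) + c * (\<Sum>i\<in>{1..M}. real i)"
    by (simp add: sum_xy flip: distrib_left sum.distrib)
  also have "\<dots> \<le> (\<Sum>i\<in>{1..M}. x i * r b s i) + (\<Sum>i\<in>{1..M}. real i * r b s i)"
    using guarantees_admissible[OF comp \<open>0 \<le> c\<close> adm] guarantees_limit pad by (meson add_mono)
  also have "\<dots> = (real M + 1) * (\<Sum>i\<in>{1..M}. r b s i)"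
    by (simp add: sum_xy sum_distrib_left flip: sum.distrib distrib_right)
  also have "\<dots> \<le> real M + 1"
    using mechanism_sum_le_one[OF mech bs, of "{1..M}"] by simp
  finally have "c * real M \<le> 1" by simp
  then show ?thesis using \<open>1 \<le> M\<close> by (simp add: le_divide_eq mult.commute)
qed

lemma competitive_DSIC_of_ratio:
  assumes "mechanism M r" "DSIC M r" "ereal c \<le> competitive_ratio M r"
  shows "competitive_DSIC M c r"
  unfolding competitive_DSIC_def
proof (intro conjI ballI impI assms(1,2))
  fix b s assume "b \<in> vecs M" "s \<in> vecs M" "0 < OPT M b s"
  then have "competitive_ratio M r \<le> ereal (gain M r b s / OPT M b s)"
    unfolding competitive_ratio_def by (intro INF_lower2[of "(b, s)"]) auto
  then have "ereal c \<le> ereal (gain M r b s / OPT M b s)" using assms(3) by (rule order_trans[rotated])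
  then have "c \<le> gain M r b s / OPT M b s" by simp
  then show "c * OPT M b s \<le> gain M r b s" using \<open>0 < OPT M b s\<close> by (simp add: le_divide_eq)
qed

theorem theorem1:
  fixes M :: nat
    and r :: "(nat \<Rightarrow> real) \<Rightarrow> (nat \<Rightarrow> real) \<Rightarrow> nat \<Rightarrow> real"
  assumes "M \<ge> 1"
    and "mechanism M r"
    and "DSIC M r"
  shows "competitive_ratio M r \<le> ereal (1 / real M)"
proof (rule ccontr)
  assume "\<not> competitive_ratio M r \<le> ereal (1 / real M)"
  then have "ereal (1 / real M) < competitive_ratio M r" by simp
  then obtain c where "ereal (1 / real M) < ereal c" "ereal c < competitive_ratio M r"
    using ereal_dense2 by blast
  then have c: "1 / real M < c" "ereal c < competitive_ratio M r" by simp_all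
  then have "competitive_DSIC M c r" using competitive_DSIC_of_ratio assms(2,3) by simp
  moreover have "0 \<le> c" using c(1) divide_nonneg_nonneg[of 1 "real M"] by linarith
  ultimately have "c \<le> 1 / real M" by (rule competitive_DSIC_le_inverse[OF \<open>M \<ge> 1\<close>])
  then show False using c(1) by simp
qed

end
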